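(* For every $0<\varepsilon\le1$ there is a sequence $(n_j,g_j)$ of pairs of positive integers such that $\frac{C(g_j,n_j)}{n_j}\gtrsim\varepsilon$ and $\frac{g_j}{n_j}\lesssim\varepsilon^2$ as $j\to\infty$.
   Context: A set $S$ of integers is a $B^*[g]\pmod n$ set if for every integer $m$ there are at most $g$ ordered pairs $(s_1,s_2)\in S\times S$ with $s_1+s_2\equiv m\pmod n$. $C(g,n)$ is the largest cardinality of a $B^*[g]\pmod n$ set contained in $\{1,\dots,n\}$. For positive sequences, $a_j\gtrsim b_j$ (equivalently $b_j\lesssim a_j$) means $\liminf_{j\to\infty}a_j/b_j\ge1$. *)

theory Defs
  imports "HOL-Number_Theory.Number_Theory" "HOL-Library.Liminf_Limsup" "HOL-Library.Extended_Real"
begin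

text \<open>S is a B*[g] (mod n) set: for every integer m there are at most g ordered pairs
  (s1,s2) in S x S with s1 + s2 = m (mod n). (The set of such pairs is required to be finite,
  so that the count is meaningful.)\<close>
definition Bstar_mod :: "nat \<Rightarrow> nat \<Rightarrow> int set \<Rightarrow> bool" where
  "Bstar_mod g n S \<longleftrightarrow>
     (\<forall>m::int. finite {(s1, s2). s1 \<in> S \<and> s2 \<in> S \<and> [s1 + s2 = m] (mod int n)}
             \<and> card {(s1, s2). s1 \<in> S \<and> s2 \<in> S \<and> [s1 + s2 = m] (mod int n)} \<le> g)"

definition Cgn :: "nat \<Rightarrow> nat \<Rightarrow> nat" where
  "Cgn g n = Max {card S | S. S \<subseteq> {1..int n} \<and> Bstar_mod g n S}"

definition asymp_ge :: "(nat \<Rightarrow> real) \<Rightarrow> (nat \<Rightarrow> real) \<Rightarrow> bool" where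
  "asymp_ge a b \<longleftrightarrow> liminf (\<lambda>j. ereal (a j / b j)) \<ge> 1"

end

(* Let p > 2 be prime and l <= p. Writing residues mod p^3 in base p as r = x + p y + p^2 z, keep
   those with (z - x y) mod p < l; there are p^2 l of them. If r and M - r both belong to this set,
   the condition on M - r is, for fixed x and i = (z - x y) mod p, an affine condition on y with
   slope (M - x) mod p - x (up to a carry), so at most l + 1 values of y survive, except for the
   single x with 2 x = M (mod p). Hence every residue M is a sum in at most p l (l + 2) ways.
   Choosing l = ceiling (eps p) and n = p^3 gives C(g,n)/n >= eps and g/n <= eps^2 + 7/p. *)

theory Submission
  imports Defs
begin

lemma base_digits:
  fixes P x y z :: int
  assumes "0 \<le> x" "x < P" "0 \<le> y" "y < P"
  shows "(x + P*y + P^2*z) mod P = x" "(x + P*y + P^2*z) div P = y + P*z"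
    and "(x + P*y + P^2*z) div P^2 = z"
proof -
  have regroup: "x + P*y + P^2*z = x + P*(y + P*z)" by (simp add: power2_eq_square algebra_simps)
  show "(x + P*y + P^2*z) mod P = x" and div: "(x + P*y + P^2*z) div P = y + P*z"
    unfolding regroup using assms by simp_all
  have "(x + P*y + P^2*z) div P^2 = (x + P*y + P^2*z) div P div P"
    using assms by (simp add: power2_eq_square zdiv_zmult2_eq)
  then show "(x + P*y + P^2*z) div P^2 = z"
    unfolding div using assms by simp
qed

lemma base_digits_decomp:
  fixes P r :: int
  assumes "0 < P"
  shows "r mod P + P*((r div P) mod P) + P^2*(r div P^2) = r"
proof -
  have "r div P^2 = r div P div P"
    using assms by (simp add: power2_eq_square zdiv_zmult2_eq)
  then have "P*((r div P) mod P) + P^2*(r div P^2) = P*(r div P)"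
    by (simp add: power2_eq_square mult.assoc flip: distrib_left)
  then show ?thesis by (metis add.assoc mod_mult_div_eq)
qed

lemma base_digits_range:
  fixes P x y z :: int
  assumes "0 \<le> x" "x < P" "0 \<le> y" "y < P" "0 \<le> z" "z < P"
  shows "x + P*y + P^2*z \<in> {0..<P^3}"
proof -
  have "P*z \<le> P*(P - 1)" using assms by (intro mult_left_mono) auto
  then have "y + P*z \<le> P*P - 1" using assms by (simp add: algebra_simps)
  then have "P*(y + P*z) \<le> P*(P*P - 1)" using assms by (intro mult_left_mono) auto
  then show ?thesis using assms by (simp add: power2_eq_square power3_eq_cube algebra_simps)
qed

lemma top_digit_range:
  fixes P r :: int
  assumes "0 < P" "r \<in> {0..<P^3}"
  shows "r div P^2 \<in> {0..<P}"
proof -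
  have "0 \<le> r mod P^2" using assms by simp
  then have "P^2 * (r div P^2) \<le> r" using mult_div_mod_eq[of "P^2" r] by linarith
  also have "r < P^2 * P" using assms by (simp add: power2_eq_square power3_eq_cube)
  finally show ?thesis using assms by (simp add: pos_imp_zdiv_nonneg_iff)
qed

lemma div_diff_digit:
  fixes P Y y :: int
  assumes "0 \<le> y" "y < P"
  shows "(Y - y) div P \<in> {Y div P - 1, Y div P}"
proof -
  have split: "Y - y = (Y mod P - y) + P * (Y div P)" by simp
  have div: "(Y - y) div P = (Y mod P - y) div P + Y div P"
    using assms by (subst split) simp
  have bounds: "0 \<le> Y mod P" "Y mod P < P" using assms by simp_all
  have "(Y mod P - y) div P \<in> {-1, 0}"
  proof (cases "y \<le> Y mod P")
    case True
    have "(Y mod P - y) div P = 0"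
      using True bounds assms by (intro div_pos_pos_trivial) linarith+
    then show ?thesis by simp
  next
    case False
    have "(Y mod P - y) div P = -1"
      by (rule int_div_pos_eq[where r = "Y mod P - y + P"]) (use False bounds assms in linarith)+
    then show ?thesis by simp
  qed
  then show ?thesis using div by auto
qed

lemma mod_le_mod_pred_plus_1:
  fixes P d :: int
  assumes "0 < P"
  shows "d mod P \<le> (d - 1) mod P + 1"
proof -
  have "d mod P = ((d - 1) mod P + 1) mod P" by (simp add: mod_add_left_eq)
  also have "\<dots> \<le> (d - 1) mod P + 1"
    using assms by (simp add: zmod_le_nonneg_dividend)
  finally show ?thesis .
qed

(* For r = x + P*y + P^2*z with digits x, y this is (z - x*y) mod P (twist_digits); writing r div P
   instead of the digit y makes it depend on r mod P^3 only (twist_mod_cube). *)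
definition twist :: "int \<Rightarrow> int \<Rightarrow> int" where
  "twist P r = (r div P^2 - (r mod P) * (r div P)) mod P"

lemma twist_digits:
  fixes P x y z :: int
  assumes "0 \<le> x" "x < P" "0 \<le> y" "y < P"
  shows "twist P (x + P*y + P^2*z) = (z - x*y) mod P"
proof -
  have e: "z - x*(y + P*z) = (z - x*y) + (-x*z)*P" by (simp add: algebra_simps)
  show ?thesis unfolding twist_def base_digits[OF assms] e by (rule mod_mult_self1)
qed

lemma twist_mod_cube:
  fixes P r :: int
  assumes "0 < P"
  shows "twist P (r mod P^3) = twist P r"
proof -
  define u q where "u = r mod P^3" and "q = r div P^3"
  have "r = u + P^3*q" unfolding u_def q_def by simp
  then have r1: "r = u + P*(P^2*q)" and r2: "r = u + P^2*(P*q)"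
    by (simp_all add: power2_eq_square power3_eq_cube mult.assoc)
  have "r mod P = u mod P" "r div P = u div P + P^2*q"
    using assms by (subst r1, simp)+
  moreover have "r div P^2 = u div P^2 + P*q"
    using assms by (subst r2) simp
  ultimately have "r div P^2 - r mod P * (r div P)
                    = u div P^2 - u mod P * (u div P) + P*(q - u mod P * P * q)"
    by (simp add: power2_eq_square algebra_simps)
  then show ?thesis unfolding twist_def u_def by simp
qed

definition twisted_residues :: "int \<Rightarrow> int \<Rightarrow> int set" where
  "twisted_residues P L = {r \<in> {0..<P^3}. twist P r < L}"

definition twisted_coords :: "int \<Rightarrow> int \<Rightarrow> int \<times> int \<times> int" where
  "twisted_coords P r = (r mod P, twist P r, (r div P) mod P)"

lemma bij_betw_twisted_coords:
  fixes P :: int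
  assumes "0 < P"
  shows "bij_betw (twisted_coords P) {0..<P^3} ({0..<P} \<times> {0..<P} \<times> {0..<P})"
proof (rule bij_betwI[where g = "\<lambda>(x, i, y). x + P*y + P^2*((i + x*y) mod P)"])
  show "twisted_coords P \<in> {0..<P^3} \<rightarrow> {0..<P} \<times> {0..<P} \<times> {0..<P}"
    using assms by (auto simp: twisted_coords_def twist_def)
  show "(\<lambda>(x, i, y). x + P*y + P^2*((i + x*y) mod P)) \<in> {0..<P} \<times> {0..<P} \<times> {0..<P} \<rightarrow> {0..<P^3}"
    using assms by (auto intro!: base_digits_range)
next
  fix r assume r: "r \<in> {0..<P^3}"
  define x y z where "x = r mod P" and "y = (r div P) mod P" and "z = r div P^2"
  have digits: "0 \<le> x" "x < P" "0 \<le> y" "y < P" "0 \<le> z" "z < P"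
    using assms top_digit_range[OF assms r] unfolding x_def y_def z_def by auto
  have r_eq: "r = x + P*y + P^2*z"
    unfolding x_def y_def z_def using base_digits_decomp[OF assms] by simp
  have "(twist P r + x*y) mod P = z"
    unfolding r_eq twist_digits[OF digits(1-4)] using digits by (simp add: mod_add_left_eq)
  then have "(\<lambda>(x, i, y). x + P*y + P^2*((i + x*y) mod P)) (twisted_coords P r) = x + P*y + P^2*z"
    unfolding twisted_coords_def x_def y_def by simp
  then show "(\<lambda>(x, i, y). x + P*y + P^2*((i + x*y) mod P)) (twisted_coords P r) = r"
    using r_eq by simp
next
  fix t assume "t \<in> {0..<P} \<times> {0..<P} \<times> {0..<P}"
  then obtain x i y where t: "t = (x, i, y)" and digits: "0 \<le> x" "x < P" "0 \<le> i" "i < P" "0 \<le> y" "y < P"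
    by auto
  have "((i + x*y) mod P - x*y) mod P = i"
    using digits by (simp add: mod_diff_left_eq)
  then show "twisted_coords P ((\<lambda>(x, i, y). x + P*y + P^2*((i + x*y) mod P)) t) = t"
    unfolding t twisted_coords_def using digits by (simp add: base_digits twist_digits)
qed

lemma card_twisted_residues:
  fixes p l :: nat
  assumes "0 < p" "l \<le> p"
  shows "card (twisted_residues (int p) (int l)) = p^2 * l"
proof -
  define P where "P = int p"
  have P: "0 < P" using assms P_def by simp
  note bij = bij_betw_twisted_coords[OF P]
  have "twisted_coords P ` twisted_residues P (int l) = {0..<P} \<times> {0..<int l} \<times> {0..<P}"
  proof
    show "twisted_coords P ` twisted_residues P (int l) \<subseteq> {0..<P} \<times> {0..<int l} \<times> {0..<P}"
      using bij_betw_apply[OF bij] by (fastforce simp: twisted_residues_def twisted_coords_def)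
    show "{0..<P} \<times> {0..<int l} \<times> {0..<P} \<subseteq> twisted_coords P ` twisted_residues P (int l)"
    proof
      fix t assume t: "t \<in> {0..<P} \<times> {0..<int l} \<times> {0..<P}"
      then have "t \<in> twisted_coords P ` {0..<P^3}"
        using assms P_def bij_betw_imp_surj_on[OF bij] by auto
      then obtain r where "r \<in> {0..<P^3}" "t = twisted_coords P r" by blast
      then show "t \<in> twisted_coords P ` twisted_residues P (int l)"
        using t by (auto simp: twisted_residues_def twisted_coords_def)
    qed
  qed
  moreover have "inj_on (twisted_coords P) (twisted_residues P (int l))"
    using bij_betw_imp_inj_on[OF bij] by (rule inj_on_subset) (auto simp: twisted_residues_def)
  ultimately have "card (twisted_residues P (int l)) = card ({0..<P} \<times> {0..<int l} \<times> {0..<P})"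
    by (metis card_image)
  then show ?thesis by (simp add: P_def card_cartesian_product power2_eq_square)
qed

(* Passing from r to M - r replaces the low digit x by (M - x) mod P and shifts the middle digit,
   so twist P (M - r) is affine in the middle digit y of r, with slope (M - x) mod P - x, up to a
   carry \<beta> out of the middle digit. *)
lemma twist_reflect:
  fixes P M r :: int
  assumes P: "0 < P"
  defines "x \<equiv> r mod P" and "y \<equiv> (r div P) mod P"
  obtains \<beta> where "\<beta> \<in> {0, 1}" and
    "twist P (M - r) = ((M - x) div P div P - (M - x) mod P * ((M - x) div P)
                         + ((M - x) mod P - x) * y - twist P r - \<beta>) mod P"
proof -
  define z x' Y where "z = r div P^2" and "x' = (M - x) mod P" and "Y = (M - x) div P"
  define D where "D = (Y - y) div P"
  have digits: "0 \<le> x" "x < P" "0 \<le> y" "y < P" "0 \<le> x'" "x' < P" "0 \<le> (Y - y) mod P" "(Y - y) mod P < P"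
    using P by (simp_all add: x_def y_def x'_def)
  have r: "r = x + P*y + P^2*z"
    unfolding x_def y_def z_def using base_digits_decomp[OF P] by simp
  have "M - r = x' + P*((Y - y) mod P) + P^2*(D - z)"
  proof -
    have "M - r = x' + P*(Y - y) - P^2*z"
      unfolding r x'_def Y_def by (simp add: algebra_simps)
    also have "P*(Y - y) = P*((Y - y) mod P) + P^2*D"
      unfolding D_def power2_eq_square by (metis distrib_left mod_mult_div_eq mult.assoc)
    finally show ?thesis by (simp add: algebra_simps)
  qed
  then have twist_Mr: "twist P (M - r) = (D - z - x' * ((Y - y) mod P)) mod P"
    using twist_digits[OF digits(5-8)] by simp
  have twist_r: "twist P r = (z - x*y) mod P"
    unfolding r using twist_digits[OF digits(1-4)] .
  obtain \<beta> where \<beta>: "\<beta> \<in> {0, 1}" "D = Y div P - \<beta>"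
    using div_diff_digit[OF digits(3,4), of Y] unfolding D_def by auto
  have expand: "D - z - x' * ((Y - y) mod P)
        = (Y div P - x' * Y + (x' - x) * y - (z - x*y) - \<beta>) + (x' * D) * P"
  proof -
    have m: "(Y - y) mod P = (Y - y) - P*D" unfolding D_def by (rule minus_mult_div_eq_mod[symmetric])
    show ?thesis unfolding m \<beta>(2) by (simp add: algebra_simps)
  qed
  have "twist P (M - r) = (Y div P - x' * Y + (x' - x) * y - (z - x*y) - \<beta>) mod P"
    unfolding twist_Mr expand by (rule mod_mult_self1)
  also have "\<dots> = (Y div P - x' * Y + (x' - x) * y - twist P r - \<beta>) mod P"
    unfolding twist_r by (metis mod_diff_left_eq mod_diff_right_eq)
  finally show ?thesis using that \<beta>(1) unfolding x'_def Y_def by blast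
qed

lemma card_affine_mod_prime_le:
  fixes P a b :: int and l :: nat
  assumes P: "prime P" and a: "\<not> P dvd a"
  shows "card {y \<in> {0..<P}. (b + a*y) mod P \<le> int l} \<le> l + 1"
proof -
  let ?Y = "{y \<in> {0..<P}. (b + a*y) mod P \<le> int l}"
  have "inj_on (\<lambda>y. (b + a*y) mod P) ?Y"
  proof (rule inj_onI)
    fix y y' assume y: "y \<in> ?Y" "y' \<in> ?Y" and eq: "(b + a*y) mod P = (b + a*y') mod P"
    have "P dvd a * (y - y')"
      using eq by (simp add: mod_eq_dvd_iff algebra_simps)
    then have "P dvd y - y'" using P a by (simp add: prime_dvd_mult_iff)
    then have "y mod P = y' mod P" by (simp add: mod_eq_dvd_iff)
    then show "y = y'" using y by simp
  qed
  moreover have "(\<lambda>y. (b + a*y) mod P) ` ?Y \<subseteq> {0..int l}"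
    using prime_gt_0_int[OF P] by auto
  ultimately have "card ?Y \<le> card {0..int l}"
    by (intro card_inj_on_le) auto
  then show ?thesis by simp
qed

lemma card_mod_reflection_fixed_le_1:
  fixes P M :: int
  assumes P: "prime P" "2 < P"
  shows "card {x \<in> {0..<P}. P dvd (M - x) mod P - x} \<le> 1"
proof -
  have "{x \<in> {0..<P}. P dvd (M - x) mod P - x} \<subseteq> {x \<in> {0..<P}. (- M + 2 * x) mod P \<le> int 0}"
  proof safe
    fix x assume "P dvd (M - x) mod P - x"
    then have "P dvd M - x - x"
      by (simp add: mod_diff_left_eq flip: mod_eq_0_iff_dvd)
    moreover have "- M + 2 * x = - (M - x - x)" by simp
    ultimately show "(- M + 2 * x) mod P \<le> int 0"
      by (metis dvd_minus_iff dvd_imp_mod_0 order_refl of_nat_0)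
  qed
  then have "card {x \<in> {0..<P}. P dvd (M - x) mod P - x}
               \<le> card {x \<in> {0..<P}. (- M + 2 * x) mod P \<le> int 0}"
    by (intro card_mono finite_Collect_conjI) simp_all
  also have "\<dots> \<le> 0 + 1"
    using P zdvd_imp_le[of P 2] by (intro card_affine_mod_prime_le) auto
  finally show ?thesis by simp
qed

lemma card_Sigma_affine_mod_prime_le:
  fixes p l :: nat and a :: "int \<Rightarrow> int" and b :: "int \<Rightarrow> int \<Rightarrow> int"
  assumes p: "prime p" and exceptional: "card {x \<in> {0..<int p}. int p dvd a x} \<le> 1"
  shows "card (SIGMA x:{0..<int p}. SIGMA i:{0..<int l}.
               {y \<in> {0..<int p}. (b x i + a x * y) mod int p \<le> int l}) \<le> p * l * (l + 2)"
proof -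
  define P where "P = int p"
  define E where "E = {x \<in> {0..<P}. P dvd a x}"
  define F where "F x = card (SIGMA i:{0..<int l}. {y \<in> {0..<P}. (b x i + a x * y) mod P \<le> int l})"
    for x
  have F_sum: "F x = (\<Sum>i\<in>{0..<int l}. card {y \<in> {0..<P}. (b x i + a x * y) mod P \<le> int l})" for x
    unfolding F_def by (intro card_SigmaI ballI finite_Collect_conjI) simp_all
  have F_le_p: "F x \<le> l * p" for x
  proof -
    have "card {y \<in> {0..<P}. (b x i + a x * y) mod P \<le> int l} \<le> card {0..<P}" for i
      by (intro card_mono) auto
    then have "card {y \<in> {0..<P}. (b x i + a x * y) mod P \<le> int l} \<le> p" for i
      by (simp add: P_def)
    then have "F x \<le> of_nat (card {0..<int l}) * p" unfolding F_sum by (intro sum_bounded_above)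
    then show ?thesis by simp
  qed
  have F_le_l: "F x \<le> l * (l + 1)" if "x \<notin> E" "x \<in> {0..<P}" for x
  proof -
    have "\<not> P dvd a x" using that by (simp add: E_def)
    then have "card {y \<in> {0..<P}. (b x i + a x * y) mod P \<le> int l} \<le> l + 1" for i
      using card_affine_mod_prime_le p by (simp add: P_def)
    then have "F x \<le> of_nat (card {0..<int l}) * (l + 1)" unfolding F_sum by (intro sum_bounded_above)
    then show ?thesis by simp
  qed
  have "card (SIGMA x:{0..<P}. SIGMA i:{0..<int l}. {y \<in> {0..<P}. (b x i + a x * y) mod P \<le> int l})
        = (\<Sum>x\<in>{0..<P}. F x)"
    unfolding F_def by (intro card_SigmaI ballI finite_SigmaI finite_Collect_conjI) simp_all
  also have "\<dots> = (\<Sum>x\<in>{0..<P} - E. F x) + (\<Sum>x\<in>E. F x)"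
    by (rule sum.subset_diff) (auto simp: E_def)
  also have "\<dots> \<le> of_nat (card ({0..<P} - E)) * (l * (l + 1)) + of_nat (card E) * (l * p)"
    using F_le_l F_le_p by (intro add_mono sum_bounded_above) auto
  also have "\<dots> \<le> p * (l * (l + 1)) + 1 * (l * p)"
    using exceptional card_mono[of "{0..<P}" "{0..<P} - E"]
    by (intro add_mono mult_right_mono) (auto simp: E_def P_def)
  also have "\<dots> = p * l * (l + 2)" by (simp add: algebra_simps)
  finally show ?thesis unfolding P_def .
qed

lemma card_twisted_representations_le:
  fixes p l :: nat and M :: int
  assumes p: "prime p" "2 < p"
  shows "card {r \<in> twisted_residues (int p) (int l). (M - r) mod (int p)^3 \<in> twisted_residues (int p) (int l)}
           \<le> p * l * (l + 2)"
proof -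
  define P where "P = int p"
  define R where "R = twisted_residues P (int l)"
  define a where "a x = (M - x) mod P - x" for x
  define c where "c x = (M - x) div P div P - (M - x) mod P * ((M - x) div P)" for x
  define T where "T = (SIGMA x:{0..<P}. SIGMA i:{0..<int l}.
                        {y \<in> {0..<P}. (c x - i + a x * y) mod P \<le> int l})"
  have P: "0 < P" "prime P" "2 < P" using p by (simp_all add: P_def)
  have "inj_on (twisted_coords P) {r \<in> R. (M - r) mod P^3 \<in> R}"
    using bij_betw_imp_inj_on[OF bij_betw_twisted_coords[OF P(1)]]
    by (rule inj_on_subset) (auto simp: R_def twisted_residues_def)
  moreover have "twisted_coords P ` {r \<in> R. (M - r) mod P^3 \<in> R} \<subseteq> T"
  proof (rule image_subsetI)
    fix r assume "r \<in> {r \<in> R. (M - r) mod P^3 \<in> R}"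
    then have r: "r \<in> R" "(M - r) mod P^3 \<in> R" by simp_all
    define x y where "x = r mod P" and "y = (r div P) mod P"
    define d where "d = c x - twist P r + a x * y"
    obtain \<beta> where \<beta>: "\<beta> \<in> {0, 1}" "twist P (M - r) = (c x + a x * y - twist P r - \<beta>) mod P"
      using twist_reflect[OF P(1), of M r, folded x_def y_def, folded a_def c_def] .
    have "twist P (M - r) < int l"
      using r(2) twist_mod_cube[OF P(1)] by (simp add: R_def twisted_residues_def)
    moreover have "c x + a x * y - twist P r - \<beta> = d - \<beta>" by (simp add: d_def)
    ultimately have "d mod P \<le> int l"
      using \<beta> mod_le_mod_pred_plus_1[OF P(1), of d] by auto
    then show "twisted_coords P r \<in> T"
      using r(1) P(1)
      by (simp add: T_def twisted_coords_def R_def twisted_residues_def twist_def x_def y_def d_def)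
  qed
  moreover have "finite T"
    unfolding T_def by (intro finite_SigmaI finite_Collect_conjI) simp_all
  ultimately have "card {r \<in> R. (M - r) mod P^3 \<in> R} \<le> card T"
    by (rule card_inj_on_le)
  also have "card T \<le> p * l * (l + 2)"
  proof -
    have "card {x \<in> {0..<P}. P dvd a x} \<le> 1"
      unfolding a_def using card_mod_reflection_fixed_le_1[OF P(2,3)] .
    then show ?thesis
      unfolding T_def P_def using card_Sigma_affine_mod_prime_le[OF p(1)] by simp
  qed
  finally show ?thesis unfolding R_def P_def .
qed

lemma Bstar_mod_translate:
  fixes c :: int
  assumes "Bstar_mod g n S"
  shows "Bstar_mod g n ((\<lambda>s. s + c) ` S)"
  unfolding Bstar_mod_def
proof
  fix m :: int
  let ?pairs = "\<lambda>S m. {(s1, s2). s1 \<in> S \<and> s2 \<in> S \<and> [s1 + s2 = m] (mod int n)}"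
  have sub: "?pairs ((\<lambda>s. s + c) ` S) m \<subseteq> (\<lambda>(s1, s2). (s1 + c, s2 + c)) ` ?pairs S (m - 2 * c)"
  proof safe
    fix s1 s2 assume s: "s1 \<in> S" "s2 \<in> S" "[s1 + c + (s2 + c) = m] (mod int n)"
    have "[(s1 + s2) + 2 * c = (m - 2 * c) + 2 * c] (mod int n)"
      using s(3) by (simp add: algebra_simps)
    then have "[s1 + s2 = m - 2 * c] (mod int n)"
      by (rule iffD1[OF cong_add_rcancel])
    then have "(s1, s2) \<in> ?pairs S (m - 2 * c)"
      using s(1,2) by simp
    then show "(s1 + c, s2 + c) \<in> (\<lambda>(s1, s2). (s1 + c, s2 + c)) ` ?pairs S (m - 2 * c)"
      by (rule rev_image_eqI) simp
  qed
  have fin: "finite (?pairs S (m - 2 * c))" and card: "card (?pairs S (m - 2 * c)) \<le> g"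
    using assms unfolding Bstar_mod_def by blast+
  show "finite (?pairs ((\<lambda>s. s + c) ` S) m) \<and> card (?pairs ((\<lambda>s. s + c) ` S) m) \<le> g"
    using finite_surj[OF fin sub] surj_card_le[OF fin sub] card by simp
qed

lemma Bstar_mod_residues:
  assumes S: "S \<subseteq> {0..<int n}"
    and reps: "\<And>m. card {r \<in> S. (m - r) mod int n \<in> S} \<le> g"
  shows "Bstar_mod g n S"
  unfolding Bstar_mod_def
proof
  fix m :: int
  let ?pairs = "{(s1, s2). s1 \<in> S \<and> s2 \<in> S \<and> [s1 + s2 = m] (mod int n)}"
  let ?firsts = "{r \<in> S. (m - r) mod int n \<in> S}"
  have sub: "?pairs \<subseteq> (\<lambda>r. (r, (m - r) mod int n)) ` ?firsts"
  proof safe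
    fix s1 s2 assume s: "s1 \<in> S" "s2 \<in> S" "[s1 + s2 = m] (mod int n)"
    have "s2 = (s1 + s2 - s1) mod int n" using S s(2) by auto
    also have "\<dots> = (m - s1) mod int n"
      using s(3) unfolding cong_def by (metis mod_diff_left_eq)
    finally show "(s1, s2) \<in> (\<lambda>r. (r, (m - r) mod int n)) ` ?firsts"
      using s by auto
  qed
  have fin: "finite ?firsts" using S by (simp add: finite_subset)
  show "finite ?pairs \<and> card ?pairs \<le> g"
    using finite_surj[OF fin sub] surj_card_le[OF fin sub] reps[of m] by simp
qed

lemma card_le_Cgn:
  assumes "S \<subseteq> {1..int n}" "Bstar_mod g n S"
  shows "card S \<le> Cgn g n"
  unfolding Cgn_def
proof (rule Max_ge)
  show "finite {card S | S. S \<subseteq> {1..int n} \<and> Bstar_mod g n S}"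
    by (rule finite_subset[of _ "card ` Pow {1..int n}"]) auto
  show "card S \<in> {card S | S. S \<subseteq> {1..int n} \<and> Bstar_mod g n S}"
    using assms by blast
qed

lemma Cgn_prime_cube_ge:
  fixes p l :: nat
  assumes p: "prime p" "2 < p" and l: "l \<le> p"
  shows "p^2 * l \<le> Cgn (p * l * (l + 2)) (p^3)"
proof -
  define R where "R = twisted_residues (int p) (int l)"
  have R: "R \<subseteq> {0..<int (p^3)}" by (auto simp: R_def twisted_residues_def)
  have "Bstar_mod (p * l * (l + 2)) (p^3) R"
    using card_twisted_representations_le[OF p] by (intro Bstar_mod_residues R) (simp add: R_def)
  then have "Bstar_mod (p * l * (l + 2)) (p^3) ((\<lambda>r. r + 1) ` R)"
    by (rule Bstar_mod_translate)
  moreover have "(\<lambda>r. r + 1) ` R \<subseteq> {1..int (p^3)}" using R by auto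
  ultimately have "card ((\<lambda>r. r + 1) ` R) \<le> Cgn (p * l * (l + 2)) (p^3)"
    by (intro card_le_Cgn)
  moreover have "card ((\<lambda>r. r + 1) ` R) = p^2 * l"
    using card_twisted_residues[of p l] p l by (simp add: card_image R_def prime_gt_0_nat)
  ultimately show ?thesis by simp
qed

lemma Cgn_prime_cube_density:
  fixes \<epsilon> :: real and p :: nat
  assumes p: "prime p" "2 < p" and \<epsilon>: "0 < \<epsilon>" "\<epsilon> \<le> 1"
  defines "l \<equiv> nat \<lceil>\<epsilon> * p\<rceil>"
  shows "\<epsilon> \<le> real (Cgn (p * l * (l + 2)) (p^3)) / real (p^3)"
    and "real (p * l * (l + 2)) / real (p^3) \<le> \<epsilon>^2 + 7 / real p"
proof -
  have p_gt: "2 < real p" and p_pos: "0 < real p" using p by simp_all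
  have l_ge: "\<epsilon> * p \<le> l" unfolding l_def by (rule real_nat_ceiling_ge)
  have l_lt: "l < \<epsilon> * p + 1"
    using \<epsilon> p_pos ceiling_correct[of "\<epsilon> * p"] by (simp add: l_def)
  have "\<epsilon> * p \<le> p" using \<epsilon> p_pos by simp
  then have "l \<le> p" unfolding l_def by (simp add: ceiling_le_iff)
  have "\<epsilon> * real p^3 = real p^2 * (\<epsilon> * p)" by (simp add: power2_eq_square power3_eq_cube)
  also have "\<dots> \<le> real p^2 * l" using l_ge by (intro mult_left_mono) auto
  also have "\<dots> \<le> Cgn (p * l * (l + 2)) (p^3)"
    using Cgn_prime_cube_ge[OF p \<open>l \<le> p\<close>] by (metis of_nat_le_iff of_nat_mult of_nat_power)
  finally show "\<epsilon> \<le> real (Cgn (p * l * (l + 2)) (p^3)) / real (p^3)"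
    using p_pos by (simp add: pos_le_divide_eq)
  have "real l * (l + 2) \<le> (\<epsilon> * p + 1) * (\<epsilon> * p + 3)"
    using l_lt by (intro mult_mono) auto
  also have "\<dots> = \<epsilon>^2 * p^2 + 4 * (\<epsilon> * p) + 3" by (simp add: power2_eq_square algebra_simps)
  also have "\<dots> \<le> \<epsilon>^2 * p^2 + 7 * p" using \<open>\<epsilon> * p \<le> p\<close> p_gt by linarith
  finally have bound: "real l * (l + 2) \<le> \<epsilon>^2 * p^2 + 7 * p" .
  have "real (p * l * (l + 2)) / real (p^3) = real l * (l + 2) / real p^2"
    using p_pos by (simp add: power2_eq_square power3_eq_cube field_simps)
  also have "\<dots> \<le> (\<epsilon>^2 * p^2 + 7 * p) / real p^2"
    using bound by (intro divide_right_mono) auto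
  also have "\<dots> = \<epsilon>^2 + 7 / real p"
    using p_pos by (simp add: power2_eq_square field_simps)
  finally show "real (p * l * (l + 2)) / real (p^3) \<le> \<epsilon>^2 + 7 / real p" .
qed

lemma asymp_geI:
  assumes "\<And>j. h j \<le> a j / b j" and "h \<longlonglongrightarrow> 1"
  shows "asymp_ge a b"
proof -
  have "liminf (\<lambda>j. ereal (h j)) = 1"
    using lim_imp_Liminf[OF trivial_limit_sequentially tendsto_ereal[OF assms(2)]] by simp
  moreover have "liminf (\<lambda>j. ereal (h j)) \<le> liminf (\<lambda>j. ereal (a j / b j))"
    using assms(1) by (intro Liminf_mono) simp
  ultimately show ?thesis unfolding asymp_ge_def by simp
qed

lemma asymp_ge_const_rightI:
  fixes c :: real
  assumes "0 < c" "\<And>j. c \<le> a j"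
  shows "asymp_ge a (\<lambda>_. c)"
  by (rule asymp_geI[where h = "\<lambda>_. 1"]) (use assms in simp_all)

lemma asymp_ge_const_leftI:
  fixes c :: real
  assumes "0 < c" "\<And>j. 0 < b j" "\<And>j. b j \<le> c + e j" "e \<longlonglongrightarrow> 0"
  shows "asymp_ge (\<lambda>_. c) b"
proof (rule asymp_geI[where h = "\<lambda>j. c / (c + e j)"])
  show "c / (c + e j) \<le> c / b j" for j
    using assms(1) assms(2,3)[of j] by (intro divide_left_mono) auto
  have "(\<lambda>j. c / (c + e j)) \<longlonglongrightarrow> c / (c + 0)"
    using assms(1,4) by (intro tendsto_intros) auto
  then show "(\<lambda>j. c / (c + e j)) \<longlonglongrightarrow> 1" using assms(1) by simp
qed

theorem proposition3p6:
  fixes \<epsilon> :: real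
  assumes "0 < \<epsilon>" and "\<epsilon> \<le> 1"
  shows "\<exists>n g :: nat \<Rightarrow> nat. (\<forall>j. 0 < n j \<and> 0 < g j)
           \<and> asymp_ge (\<lambda>j. real (Cgn (g j) (n j)) / real (n j)) (\<lambda>j. \<epsilon>)
           \<and> asymp_ge (\<lambda>j. \<epsilon>\<^sup>2) (\<lambda>j. real (g j) / real (n j))"
proof -
  have "\<forall>j. \<exists>q. prime q \<and> j + 2 < (q :: nat)" using bigger_prime by blast
  then obtain p :: "nat \<Rightarrow> nat" where p: "\<And>j. prime (p j)" "\<And>j. j + 2 < p j"
    by metis
  define l where "l j = nat \<lceil>\<epsilon> * p j\<rceil>" for j
  define n g where "n j = p j ^ 3" and "g j = p j * l j * (l j + 2)" for j
  have p_gt: "2 < p j" and p_ge: "real j \<le> real (p j)" for j using p(2)[of j] by simp_all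
  note bounds = Cgn_prime_cube_density[OF p(1) p_gt assms, folded l_def n_def g_def]
  have pos: "0 < n j" "0 < g j" for j
    using p assms by (simp_all add: n_def g_def l_def prime_gt_0_nat)
  have "filterlim (\<lambda>j. real (p j)) at_top sequentially"
    using p_ge by (intro filterlim_at_top_mono[OF filterlim_real_sequentially always_eventually]) blast
  then have "(\<lambda>j. 7 / real (p j)) \<longlonglongrightarrow> 0"
    by (intro tendsto_divide_0[OF tendsto_const] filterlim_at_top_imp_at_infinity)
  then have "asymp_ge (\<lambda>j. \<epsilon>\<^sup>2) (\<lambda>j. real (g j) / real (n j))"
    using assms pos bounds(2) by (intro asymp_ge_const_leftI) auto
  moreover have "asymp_ge (\<lambda>j. real (Cgn (g j) (n j)) / real (n j)) (\<lambda>j. \<epsilon>)"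
    using assms bounds(1) by (intro asymp_ge_const_rightI) auto
  ultimately show ?thesis using pos by blast
qed

end
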